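(* Let $G$ and $H$ be graphs such that the direct product $G\times H$ is a balanced distance magic graph, and let $\ell$ be a balanced distance magic labeling of $G\times H$ in which $(g,h)$ and $(g',h')$ are twins, where $g\neq g'$ and $h\neq h'$. Let $\widehat\ell$ be obtained from $\ell$ by exchanging the labels of $(g',h')$ and $(g',h)$, i.e. $\widehat\ell(g',h)=\ell(g',h')$, $\widehat\ell(g',h')=\ell(g',h)$, and $\widehat\ell(a,b)=\ell(a,b)$ for all other vertices. Then $\widehat\ell$ is a balanced distance magic labeling of $G\times H$ in which $(g,h)$ and $(g',h)$ are twins.
   Context: All graphs are finite and simple. For a graph $G$ and vertex $x$, $N(x)=N_G(x)$ is the (open) neighborhood of $x$. A distance magic labeling of a graph $G$ of order $N$ is a bijection $\ell\colon V(G)\to\{1,\dots,N\}$ for which there is a constant $k$ such that the weight $w(x)=\sum_{y\in N(x)}\ell(y)$ equals $k$ for every $x\in V(G)$. A balanced distance magic labeling of a graph $G$ with an even number $N$ of vertices is a distance magic labeling $\ell$ such that for every $w\in V(G)$: whenever $u\in N(w)$ has $\ell(u)=i$, there is $v\in N(w)$ with $\ell(v)=N+1-i$. Under such $\ell$, the vertices labeled $i$ and $N+1-i$ are called twins (with respect to $\ell$). $G$ is a balanced distance magic graph if it has an even number of vertices and admits a balanced distance magic labeling. The direct product $G\times H$ has vertex set $V(G)\times V(H)$, with $(g,h)$ adjacent to $(g',h')$ iff $gg'\in E(G)$ and $hh'\in E(H)$. *)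

theory Defs
  imports Main
begin

definition graph :: "'a set \<Rightarrow> ('a \<Rightarrow> 'a \<Rightarrow> bool) \<Rightarrow> bool" where
  "graph V E \<longleftrightarrow> finite V \<and> (\<forall>x y. E x y \<longrightarrow> x \<in> V \<and> y \<in> V)
     \<and> (\<forall>x y. E x y \<longrightarrow> E y x) \<and> (\<forall>x. \<not> E x x)"

definition nbhd :: "'a set \<Rightarrow> ('a \<Rightarrow> 'a \<Rightarrow> bool) \<Rightarrow> 'a \<Rightarrow> 'a set" where
  "nbhd V E x = {y \<in> V. E x y}"

definition distance_magic_labeling ::
  "'a set \<Rightarrow> ('a \<Rightarrow> 'a \<Rightarrow> bool) \<Rightarrow> ('a \<Rightarrow> nat) \<Rightarrow> bool" where
  "distance_magic_labeling V E l \<longleftrightarrow>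
     bij_betw l V {1..card V} \<and> (\<exists>k. \<forall>x\<in>V. (\<Sum>y\<in>nbhd V E x. l y) = k)"

definition balanced_dm_labeling ::
  "'a set \<Rightarrow> ('a \<Rightarrow> 'a \<Rightarrow> bool) \<Rightarrow> ('a \<Rightarrow> nat) \<Rightarrow> bool" where
  "balanced_dm_labeling V E l \<longleftrightarrow> even (card V) \<and> distance_magic_labeling V E l \<and>
     (\<forall>w\<in>V. \<forall>u\<in>nbhd V E w. \<exists>v\<in>nbhd V E w. l v = card V + 1 - l u)"

definition balanced_dm_graph :: "'a set \<Rightarrow> ('a \<Rightarrow> 'a \<Rightarrow> bool) \<Rightarrow> bool" where
  "balanced_dm_graph V E \<longleftrightarrow> even (card V) \<and> (\<exists>l. balanced_dm_labeling V E l)"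

definition twins :: "'a set \<Rightarrow> ('a \<Rightarrow> nat) \<Rightarrow> 'a \<Rightarrow> 'a \<Rightarrow> bool" where
  "twins V l x y \<longleftrightarrow> x \<in> V \<and> y \<in> V \<and> l y = card V + 1 - l x"

definition dprod_V :: "'a set \<Rightarrow> 'b set \<Rightarrow> ('a \<times> 'b) set" where
  "dprod_V VG VH = VG \<times> VH"

definition dprod_E :: "('a \<Rightarrow> 'a \<Rightarrow> bool) \<Rightarrow> ('b \<Rightarrow> 'b \<Rightarrow> bool) \<Rightarrow> ('a \<times> 'b) \<Rightarrow> ('a \<times> 'b) \<Rightarrow> bool" where
  "dprod_E EG EH p q \<longleftrightarrow> EG (fst p) (fst q) \<and> EH (snd p) (snd q)"

end

theory Submission
  imports Defs "HOL-Combinatorics.Transposition"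
begin

(* In a balanced distance magic labeling, twins have exactly
   the same neighbours: every neighbourhood containing one of them contains its
   complementary label, i.e. the other.  In the direct product G x H this forces
   (g',h) and (g',h') to have the same neighbours as well, provided the graph has
   edges at all (otherwise the magic constant is 0 and all neighbourhoods are
   empty).  Finally, exchanging the labels of two vertices with equal
   neighbourhoods is composing the labeling with a permutation of V fixing every
   neighbourhood setwise, and such a composition preserves being a balanced
   distance magic labeling.  After the exchange, (g',h) carries the old label of
   (g',h'), the twin of (g,h). *)

definition same_nbrs :: "('a \<Rightarrow> 'a \<Rightarrow> bool) \<Rightarrow> 'a \<Rightarrow> 'a \<Rightarrow> bool" where
  "same_nbrs E x y \<longleftrightarrow> (\<forall>w. E w x \<longleftrightarrow> E w y)"

text \<open>Twinship is symmetric, since labels lie in 1..N.\<close>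
lemma twins_sym:
  assumes "distance_magic_labeling V E l" and "twins V l x y"
  shows "twins V l y x"
proof -
  have "l x \<in> {1..card V}"
    using assms bij_betwE unfolding distance_magic_labeling_def twins_def by blast
  then show ?thesis using assms(2) unfolding twins_def by auto
qed

lemma twin_in_nbhd:
  assumes bal: "balanced_dm_labeling V E l" and tw: "twins V l x y"
    and w: "w \<in> V" and "E w x"
  shows "E w y"
proof -
  have "x \<in> nbhd V E w" using tw \<open>E w x\<close> by (simp add: nbhd_def twins_def)
  then obtain v where v: "v \<in> nbhd V E w" "l v = card V + 1 - l x"
    using bal w unfolding balanced_dm_labeling_def by blast
  have "inj_on l V"
    using bal unfolding balanced_dm_labeling_def distance_magic_labeling_def bij_betw_def by blast
  moreover have "v \<in> V" "y \<in> V" "l v = l y" using v tw by (auto simp: nbhd_def twins_def)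
  ultimately have "v = y" by (simp add: inj_on_eq_iff)
  then show ?thesis using v(1) unfolding nbhd_def by blast
qed

lemma twins_same_nbrs:
  assumes bal: "balanced_dm_labeling V E l" and tw: "twins V l x y"
    and edges: "\<And>u v. E u v \<Longrightarrow> u \<in> V \<and> v \<in> V"
  shows "same_nbrs E x y"
proof -
  have tw': "twins V l y x"
    using twins_sym[OF _ tw] bal unfolding balanced_dm_labeling_def by blast
  have "E w x \<longleftrightarrow> E w y" for w
  proof (cases "w \<in> V")
    case True
    then show ?thesis using twin_in_nbhd[OF bal tw True] twin_in_nbhd[OF bal tw' True] by blast
  next
    case False
    then show ?thesis using edges by blast
  qed
  then show ?thesis unfolding same_nbrs_def by blast
qed

text \<open>With a distance magic labeling, one isolated vertex forces all vertices to be
  isolated: the magic constant is then 0, while every label is positive.\<close>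
lemma isolated_vertex_all_isolated:
  assumes dm: "distance_magic_labeling V E l" and "finite V"
    and x: "x \<in> V" "nbhd V E x = {}" and z: "z \<in> V"
  shows "nbhd V E z = {}"
proof (rule ccontr)
  assume "nbhd V E z \<noteq> {}"
  then obtain w where w: "w \<in> nbhd V E z" by blast
  obtain k where k: "\<And>u. u \<in> V \<Longrightarrow> (\<Sum>y\<in>nbhd V E u. l y) = k"
    using dm unfolding distance_magic_labeling_def by blast
  have "k = 0" using k[OF x(1)] x(2) by simp
  moreover have "l w \<le> (\<Sum>y\<in>nbhd V E z. l y)"
    using w \<open>finite V\<close> by (intro member_le_sum) (auto simp: nbhd_def)
  moreover have "l w \<ge> 1"
    using dm w bij_betwE unfolding distance_magic_labeling_def nbhd_def by fastforce
  ultimately show False using k[OF z] by simp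
qed

lemma dprod_same_nbrs_shift:
  assumes symG: "\<And>a b. EG a b \<Longrightarrow> EG b a" and symH: "\<And>a b. EH a b \<Longrightarrow> EH b a"
    and same: "same_nbrs (dprod_E EG EH) (g, h) (g', h')"
    and nbr: "dprod_E EG EH (g, h) (c, d)"
  shows "same_nbrs (dprod_E EG EH) (g', h) (g', h')"
proof -
  have same': "EG a g \<and> EH b h \<longleftrightarrow> EG a g' \<and> EH b h'" for a b
    using same unfolding same_nbrs_def dprod_E_def by fastforce
  have "EG a g \<and> EH b h" if "EG a g'" "EH b h" for a b
  proof -
    have "EG c g \<and> EH d h" using nbr symG symH by (auto simp: dprod_E_def)
    then have "EH d h'" using same' by blast
    then have "EG a g" using same' \<open>EG a g'\<close> by blast
    then show ?thesis using \<open>EH b h\<close> by blast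
  qed
  then show ?thesis
    using same' unfolding same_nbrs_def dprod_E_def by auto
qed

text \<open>Relabelling along a permutation of V that fixes every neighbourhood setwise
  preserves balanced distance magic labelings: weights are reindexed sums and
  complementary labels are transported along the permutation.\<close>
lemma balanced_dm_labeling_permute:
  assumes bal: "balanced_dm_labeling V E l"
    and perm: "bij_betw \<sigma> V V"
    and fix_nbhd: "\<And>w. w \<in> V \<Longrightarrow> \<sigma> ` nbhd V E w = nbhd V E w"
  shows "balanced_dm_labeling V E (l \<circ> \<sigma>)"
proof -
  have labels: "bij_betw l V {1..card V}"
    using bal unfolding balanced_dm_labeling_def distance_magic_labeling_def by blast
  obtain k where magic: "\<And>x. x \<in> V \<Longrightarrow> (\<Sum>y\<in>nbhd V E x. l y) = k"
    using bal unfolding balanced_dm_labeling_def distance_magic_labeling_def by blast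
  have weight: "(\<Sum>z\<in>nbhd V E w. (l \<circ> \<sigma>) z) = (\<Sum>z\<in>nbhd V E w. l z)" if w: "w \<in> V" for w
  proof -
    have "nbhd V E w \<subseteq> V" by (auto simp: nbhd_def)
    then have "inj_on \<sigma> (nbhd V E w)"
      using bij_betw_imp_inj_on[OF perm] inj_on_subset by blast
    then have "(\<Sum>z\<in>nbhd V E w. (l \<circ> \<sigma>) z) = (\<Sum>z\<in>\<sigma> ` nbhd V E w. l z)"
      by (simp add: sum.reindex)
    also have "\<dots> = (\<Sum>z\<in>nbhd V E w. l z)" by (simp only: fix_nbhd[OF w])
    finally show ?thesis .
  qed
  have complement: "\<exists>v\<in>nbhd V E w. (l \<circ> \<sigma>) v = card V + 1 - (l \<circ> \<sigma>) u"
    if w: "w \<in> V" and u: "u \<in> nbhd V E w" for w u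
  proof -
    have "\<sigma> u \<in> nbhd V E w" using u fix_nbhd[OF w] by blast
    then obtain v where v: "v \<in> nbhd V E w" "l v = card V + 1 - l (\<sigma> u)"
      using bal w unfolding balanced_dm_labeling_def by blast
    then have "v \<in> \<sigma> ` nbhd V E w" by (simp only: fix_nbhd[OF w])
    then obtain v' where "v' \<in> nbhd V E w" "v = \<sigma> v'" by blast
    then show ?thesis using v(2) by auto
  qed
  have "bij_betw (l \<circ> \<sigma>) V {1..card V}" using bij_betw_trans[OF perm labels] .
  moreover have "\<forall>x\<in>V. (\<Sum>y\<in>nbhd V E x. (l \<circ> \<sigma>) y) = k"
    using weight magic by simp
  ultimately show ?thesis
    using bal complement unfolding balanced_dm_labeling_def distance_magic_labeling_def by blast
qed

lemma balanced_dm_labeling_swap: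
  assumes bal: "balanced_dm_labeling V E l" and "p \<in> V" "q \<in> V"
    and same: "same_nbrs E p q"
  shows "balanced_dm_labeling V E (l(p := l q, q := l p))"
proof -
  have "transpose p q ` nbhd V E w = nbhd V E w" for w
    using same \<open>p \<in> V\<close> \<open>q \<in> V\<close> by (intro transpose_image_eq) (auto simp: nbhd_def same_nbrs_def)
  then have "balanced_dm_labeling V E (l \<circ> transpose p q)"
    using bal \<open>p \<in> V\<close> \<open>q \<in> V\<close> by (intro balanced_dm_labeling_permute) auto
  then show ?thesis by (simp add: Fun.swap_def)
qed

theorem lemma1:
  fixes VG :: "'a set" and EG :: "'a \<Rightarrow> 'a \<Rightarrow> bool"
    and VH :: "'b set" and EH :: "'b \<Rightarrow> 'b \<Rightarrow> bool"
    and l :: "'a \<times> 'b \<Rightarrow> nat"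
  assumes "graph VG EG" and "graph VH EH"
    and "balanced_dm_graph (dprod_V VG VH) (dprod_E EG EH)"
    and "balanced_dm_labeling (dprod_V VG VH) (dprod_E EG EH) l"
    and "twins (dprod_V VG VH) l (g, h) (g', h')"
    and "g \<noteq> g'" and "h \<noteq> h'"
  shows "balanced_dm_labeling (dprod_V VG VH) (dprod_E EG EH)
           (l((g', h) := l (g', h'), (g', h') := l (g', h)))
       \<and> twins (dprod_V VG VH) (l((g', h) := l (g', h'), (g', h') := l (g', h))) (g, h) (g', h)"
proof -
  let ?V = "dprod_V VG VH" and ?E = "dprod_E EG EH"
  have G: "finite VG" "\<And>a b. EG a b \<Longrightarrow> a \<in> VG \<and> b \<in> VG" "\<And>a b. EG a b \<Longrightarrow> EG b a"
    using assms(1) unfolding graph_def by auto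
  have H: "finite VH" "\<And>a b. EH a b \<Longrightarrow> a \<in> VH \<and> b \<in> VH" "\<And>a b. EH a b \<Longrightarrow> EH b a"
    using assms(2) unfolding graph_def by auto
  have edges: "\<And>u v. ?E u v \<Longrightarrow> u \<in> ?V \<and> v \<in> ?V"
    using G(2) H(2) by (auto simp: dprod_E_def dprod_V_def mem_Times_iff)
  have in_V: "(g, h) \<in> ?V" "(g', h) \<in> ?V" "(g', h') \<in> ?V"
    using assms(5) by (auto simp: twins_def dprod_V_def)
  have same: "same_nbrs ?E (g, h) (g', h')"
    using twins_same_nbrs[OF assms(4,5) edges] .
  have "same_nbrs ?E (g', h) (g', h')"
  proof (cases "nbhd ?V ?E (g, h) = {}")
    case True
    moreover have "distance_magic_labeling ?V ?E l" "finite ?V"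
      using assms(4) G(1) H(1) by (auto simp: balanced_dm_labeling_def dprod_V_def)
    ultimately have "nbhd ?V ?E u = {}" if "u \<in> ?V" for u
      using isolated_vertex_all_isolated in_V(1) that by metis
    then show ?thesis using edges unfolding same_nbrs_def nbhd_def by blast
  next
    case False
    then obtain c d where "?E (g, h) (c, d)" by (auto simp: nbhd_def)
    then show ?thesis using dprod_same_nbrs_shift G(3) H(3) same by metis
  qed
  then have "balanced_dm_labeling ?V ?E (l((g', h) := l (g', h'), (g', h') := l (g', h)))"
    using balanced_dm_labeling_swap[OF assms(4) in_V(2,3)] by blast
  moreover have "twins ?V (l((g', h) := l (g', h'), (g', h') := l (g', h))) (g, h) (g', h)"
    using assms(5,6) in_V(2) by (simp add: twins_def)
  ultimately show ?thesis by blast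
qed

end
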